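(* Let $M_n$ be endowed with any norm, let $\phi: M_n\to M_n$ be a linear map that is contractive with respect to this norm, and let $\psi$ be an idempotent map ($\psi\circ\psi=\psi$) that is a limit point of the sequence of iterates $(\phi^k)_{k\ge1}$. Then \[ \lim_{k\to\infty}\|\phi^k-\phi^k\circ\psi\| = 0. \]
   Context: $M_n$ denotes the $n\times n$ complex matrices; $\phi^k$ is the $k$-fold composition of $\phi$ with itself; $\|\cdot\|$ is any norm on the space of linear maps $M_n\to M_n$. *)

theory Defs
  imports "HOL-Analysis.Analysis"
begin

text \<open>M_n is modelled as the type complex^'n^'n of n x n complex matrices
  (n = CARD('n) arbitrary but fixed).\<close>

type_synonym 'n mat = "complex ^ 'n ^ 'n"

definition cscale :: "complex \<Rightarrow> ('n::finite) mat \<Rightarrow> ('n::finite) mat" where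
  "cscale c A = (\<chi> i j. c * A $ i $ j)"

definition mat_linear :: "(('n::finite) mat \<Rightarrow> ('n::finite) mat) \<Rightarrow> bool" where
  "mat_linear f \<longleftrightarrow> (\<forall>A B. f (A + B) = f A + f B) \<and> (\<forall>c A. f (cscale c A) = cscale c (f A))"

definition is_mat_norm :: "(('n::finite) mat \<Rightarrow> real) \<Rightarrow> bool" where
  "is_mat_norm N \<longleftrightarrow>
     (\<forall>A. 0 \<le> N A) \<and> (\<forall>A. N A = 0 \<longleftrightarrow> A = 0) \<and>
     (\<forall>A B. N (A + B) \<le> N A + N B) \<and> (\<forall>c A. N (cscale c A) = cmod c * N A)"

definition is_map_norm :: "((('n::finite) mat \<Rightarrow> ('n::finite) mat) \<Rightarrow> real) \<Rightarrow> bool" where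
  "is_map_norm M \<longleftrightarrow>
     (\<forall>T. mat_linear T \<longrightarrow> 0 \<le> M T) \<and>
     (\<forall>T. mat_linear T \<longrightarrow> (M T = 0 \<longleftrightarrow> T = (\<lambda>_. 0))) \<and>
     (\<forall>S T. mat_linear S \<longrightarrow> mat_linear T \<longrightarrow> M (\<lambda>A. S A + T A) \<le> M S + M T) \<and>
     (\<forall>c T. mat_linear T \<longrightarrow> M (\<lambda>A. cscale c (T A)) = cmod c * M T)"

definition contractive :: "(('n::finite) mat \<Rightarrow> real) \<Rightarrow> (('n::finite) mat \<Rightarrow> ('n::finite) mat) \<Rightarrow> bool" where
  "contractive N f \<longleftrightarrow> (\<forall>A. N (f A) \<le> N A)"

text \<open>psi is a limit point (subsequential limit) of the iterates (phi^k)_{k>=1},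
  convergence taken in the topology induced by N (pointwise; on the finite-dimensional
  space of maps this is the norm topology).\<close>
definition iterate_limit_point :: "(('n::finite) mat \<Rightarrow> real) \<Rightarrow> (('n::finite) mat \<Rightarrow> ('n::finite) mat) \<Rightarrow> (('n::finite) mat \<Rightarrow> ('n::finite) mat) \<Rightarrow> bool" where
  "iterate_limit_point N f g \<longleftrightarrow>
     (\<exists>r::nat \<Rightarrow> nat. strict_mono r \<and> (\<forall>j. 1 \<le> r j) \<and>
        (\<forall>A. (\<lambda>j. N ((f ^^ r j) A - g A)) \<longlonglongrightarrow> 0))"

end

theory Submission
  imports Defs
begin

text \<open>Along a subsequence \<open>r\<close>, the iterates \<open>\<phi> ^^ r j\<close> converge pointwise to
  \<open>\<psi>\<close>; so \<open>\<psi>\<close> is linear, idempotence puts \<open>A - \<psi> A\<close> in its kernel, and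
  \<open>(\<phi> ^^ r j) (A - \<psi> A)\<close> tends to \<open>0\<close>. Because \<open>\<phi>\<close> is contractive, the norms
  of \<open>(\<phi> ^^ k) (A - \<psi> A)\<close> decrease in \<open>k\<close>, so the whole sequence tends to \<open>0\<close>:
  the linear maps \<open>\<phi> ^^ k - (\<phi> ^^ k) \<circ> \<psi>\<close> converge to \<open>0\<close> pointwise. On the
  finite-dimensional space \<open>M\<^sub>n\<close> every seminorm is dominated by the Euclidean norm and every
  norm dominates a multiple of it; expanding in matrix units then turns pointwise convergence
  of linear maps into convergence in any norm on the space of maps.\<close>

lemma cscale_add_right: "cscale c (A + B) = cscale c A + cscale c B"
  by (simp add: cscale_def vec_eq_iff algebra_simps)

lemma cscale_diff_right: "cscale c (A - B) = cscale c A - cscale c B"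
  by (simp add: cscale_def vec_eq_iff algebra_simps)

lemma cscale_cscale: "cscale a (cscale b A) = cscale (a * b) A"
  by (simp add: cscale_def vec_eq_iff)

lemma cscale_zero_left [simp]: "cscale 0 A = 0"
  by (simp add: cscale_def vec_eq_iff)

lemma cscale_zero_right [simp]: "cscale c 0 = 0"
  by (simp add: cscale_def vec_eq_iff)

lemma cscale_minus_one: "cscale (-1) A = - A"
  by (simp add: cscale_def vec_eq_iff)

lemma scaleR_eq_cscale: "r *\<^sub>R A = cscale (of_real r) A"
  unfolding cscale_def vec_eq_iff by (simp add: scaleR_conv_of_real [where 'a=complex])

lemma bounded_linear_cscale: "bounded_linear (cscale c)"
  unfolding linear_conv_bounded_linear [symmetric]
  by (rule linearI) (simp_all add: cscale_add_right scaleR_eq_cscale cscale_cscale mult.commute)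

lemma tendsto_cscale:
  "(f \<longlongrightarrow> l) F \<Longrightarrow> ((\<lambda>x. cscale c (f x)) \<longlongrightarrow> cscale c l) F"
  by (rule bounded_linear.tendsto [OF bounded_linear_cscale])

definition mat_unit :: "'n::finite \<Rightarrow> 'n \<Rightarrow> 'n mat" where
  "mat_unit a b = (\<chi> i j. if j = b then if i = a then 1 else 0 else 0)"

lemma mat_unit_expansion: "A = (\<Sum>a\<in>UNIV. \<Sum>b\<in>UNIV. cscale (A $ a $ b) (mat_unit a b))"
  by (simp add: vec_eq_iff cscale_def mat_unit_def if_distrib [of "\<lambda>x. _ * x"] cong: if_cong)

lemma mat_linear_add: "mat_linear f \<Longrightarrow> f (A + B) = f A + f B"
  unfolding mat_linear_def by blast

lemma mat_linear_cscale: "mat_linear f \<Longrightarrow> f (cscale c A) = cscale c (f A)"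
  unfolding mat_linear_def by blast

lemma mat_linear_zero: "mat_linear f \<Longrightarrow> f 0 = 0"
  by (metis add_cancel_right_right mat_linear_add)

lemma mat_linear_diff: "mat_linear f \<Longrightarrow> f (A - B) = f A - f B"
  by (metis cscale_minus_one diff_conv_add_uminus mat_linear_add mat_linear_cscale)

lemma mat_linear_sum: "mat_linear f \<Longrightarrow> f (\<Sum>i\<in>S. g i) = (\<Sum>i\<in>S. f (g i))"
  by (induction S rule: infinite_finite_induct) (simp_all add: mat_linear_zero mat_linear_add)

lemma mat_linear_id: "mat_linear id"
  by (simp add: mat_linear_def)

lemma mat_linear_comp: "mat_linear f \<Longrightarrow> mat_linear g \<Longrightarrow> mat_linear (f \<circ> g)"
  by (simp add: mat_linear_def)

lemma mat_linear_funpow: "mat_linear f \<Longrightarrow> mat_linear (f ^^ n)"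
  by (induction n) (simp_all add: mat_linear_id mat_linear_comp)

lemma mat_linear_add_fun: "mat_linear f \<Longrightarrow> mat_linear g \<Longrightarrow> mat_linear (\<lambda>A. f A + g A)"
  by (simp add: mat_linear_def cscale_add_right algebra_simps)

lemma mat_linear_diff_fun: "mat_linear f \<Longrightarrow> mat_linear g \<Longrightarrow> mat_linear (\<lambda>A. f A - g A)"
  by (simp add: mat_linear_def cscale_diff_right algebra_simps)

lemma mat_linear_sum_fun:
  "(\<And>i. i \<in> S \<Longrightarrow> mat_linear (f i)) \<Longrightarrow> mat_linear (\<lambda>A. \<Sum>i\<in>S. f i A)"
proof (induction S rule: infinite_finite_induct)
  case (insert i S)
  then show ?case by (simp add: mat_linear_add_fun)
qed (simp_all add: mat_linear_def)

lemma mat_linear_entry_cscale: "mat_linear (\<lambda>A. cscale (A $ a $ b) B)"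
  by (simp add: mat_linear_def cscale_def vec_eq_iff algebra_simps)

lemma mat_linear_unit_expansion:
  assumes "mat_linear f"
  shows "f = (\<lambda>A. \<Sum>a\<in>UNIV. \<Sum>b\<in>UNIV. cscale (A $ a $ b) (f (mat_unit a b)))"
proof
  fix A
  have "f A = f (\<Sum>a\<in>UNIV. \<Sum>b\<in>UNIV. cscale (A $ a $ b) (mat_unit a b))"
    by (simp only: mat_unit_expansion [of A, symmetric])
  then show "f A = (\<Sum>a\<in>UNIV. \<Sum>b\<in>UNIV. cscale (A $ a $ b) (f (mat_unit a b)))"
    by (simp add: assms mat_linear_sum mat_linear_cscale)
qed

lemma mat_linear_limit:
  assumes lin: "\<And>j. mat_linear (f j)" and lim: "\<And>A. (\<lambda>j. f j A) \<longlonglongrightarrow> g A"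
  shows "mat_linear g"
  unfolding mat_linear_def
proof (intro conjI allI)
  fix A B c
  have "(\<lambda>j. f j (A + B)) \<longlonglongrightarrow> g A + g B"
    using tendsto_add [OF lim lim] by (simp add: lin mat_linear_add)
  then show "g (A + B) = g A + g B"
    using lim LIMSEQ_unique by blast
  have "(\<lambda>j. f j (cscale c A)) \<longlonglongrightarrow> cscale c (g A)"
    using tendsto_cscale [OF lim] by (simp add: lin mat_linear_cscale)
  then show "g (cscale c A) = cscale c (g A)"
    using lim LIMSEQ_unique by blast
qed

definition mat_seminorm :: "('n::finite mat \<Rightarrow> real) \<Rightarrow> bool" where
  "mat_seminorm P \<longleftrightarrow>
     (\<forall>A B. P (A + B) \<le> P A + P B) \<and> (\<forall>c A. P (cscale c A) = cmod c * P A)"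

lemma mat_seminorm_triangle: "mat_seminorm P \<Longrightarrow> P (A + B) \<le> P A + P B"
  unfolding mat_seminorm_def by blast

lemma mat_seminorm_cscale: "mat_seminorm P \<Longrightarrow> P (cscale c A) = cmod c * P A"
  unfolding mat_seminorm_def by blast

lemma mat_seminorm_minus: "mat_seminorm P \<Longrightarrow> P (- A) = P A"
  by (metis cscale_minus_one mat_seminorm_cscale norm_minus_cancel norm_one mult_1)

lemma mat_seminorm_nonneg: "mat_seminorm P \<Longrightarrow> 0 \<le> P A"
  using mat_seminorm_triangle [of P A "- A"] mat_seminorm_cscale [of P 0 A]
  by (simp add: mat_seminorm_minus)

lemma mat_seminorm_sum: "mat_seminorm P \<Longrightarrow> P (\<Sum>i\<in>S. f i) \<le> (\<Sum>i\<in>S. P (f i))"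
proof (induction S rule: infinite_finite_induct)
  case (insert i S)
  then show ?case
    using mat_seminorm_triangle [of P "f i" "sum f S"] by simp
qed (use mat_seminorm_cscale [of P 0 0] in simp_all)

lemma mat_seminorm_le_norm:
  assumes "mat_seminorm P"
  shows "P A \<le> (\<Sum>a\<in>UNIV. \<Sum>b\<in>UNIV. P (mat_unit a b)) * norm A"
proof -
  have "P A = P (\<Sum>a\<in>UNIV. \<Sum>b\<in>UNIV. cscale (A $ a $ b) (mat_unit a b))"
    by (simp only: mat_unit_expansion [of A, symmetric])
  also have "\<dots> \<le> (\<Sum>a\<in>UNIV. P (\<Sum>b\<in>UNIV. cscale (A $ a $ b) (mat_unit a b)))"
    by (rule mat_seminorm_sum [OF assms])
  also have "\<dots> \<le> (\<Sum>a\<in>UNIV. \<Sum>b\<in>UNIV. P (cscale (A $ a $ b) (mat_unit a b)))"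
    by (intro sum_mono mat_seminorm_sum [OF assms])
  also have "\<dots> \<le> (\<Sum>a\<in>UNIV. \<Sum>b\<in>UNIV. norm A * P (mat_unit a b))"
  proof (intro sum_mono)
    fix a b
    have "cmod (A $ a $ b) \<le> norm A"
      using Finite_Cartesian_Product.norm_nth_le [of "A $ a" b]
        Finite_Cartesian_Product.norm_nth_le [of A a]
      by linarith
    then show "P (cscale (A $ a $ b) (mat_unit a b)) \<le> norm A * P (mat_unit a b)"
      by (simp add: mat_seminorm_cscale [OF assms] mult_right_mono mat_seminorm_nonneg [OF assms])
  qed
  finally show ?thesis
    by (simp add: sum_distrib_left sum_distrib_right mult.commute)
qed

lemma mat_seminorm_tendsto_zero:
  assumes "mat_seminorm P" and "(X \<longlongrightarrow> 0) F"
  shows "((\<lambda>x. P (X x)) \<longlongrightarrow> 0) F"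
proof (rule Lim_null_comparison)
  let ?K = "\<Sum>a\<in>UNIV. \<Sum>b\<in>UNIV. P (mat_unit a b)"
  have "norm (P (X x)) \<le> ?K * norm (X x)" for x
    using mat_seminorm_nonneg [OF assms(1), of "X x"] mat_seminorm_le_norm [OF assms(1), of "X x"]
    by simp
  then show "\<forall>\<^sub>F x in F. norm (P (X x)) \<le> ?K * norm (X x)"
    by (intro always_eventually allI)
  show "((\<lambda>x. ?K * norm (X x)) \<longlongrightarrow> 0) F"
    by (rule tendsto_mult_right_zero [OF tendsto_norm_zero [OF assms(2)]])
qed

lemma mat_seminorm_continuous_on:
  assumes "mat_seminorm P"
  shows "continuous_on S P"
proof (rule lipschitz_on_continuous_on)
  let ?K = "\<Sum>a\<in>UNIV. \<Sum>b\<in>UNIV. P (mat_unit a b)"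
  have tri: "P A \<le> P (A - B) + P B" for A B
    using mat_seminorm_triangle [OF assms, of "A - B" B] by simp
  have sym: "P (B - A) = P (A - B)" for A B
    using mat_seminorm_minus [OF assms, of "A - B"] by simp
  have dist_le: "dist (P A) (P B) \<le> ?K * dist A B" for A B
    using tri [of A B] tri [of B A] sym [of A B] mat_seminorm_le_norm [OF assms, of "A - B"]
    by (simp add: dist_real_def dist_norm abs_le_iff)
  show "?K-lipschitz_on S P"
    by (rule lipschitz_onI [OF dist_le sum_nonneg [OF sum_nonneg [OF mat_seminorm_nonneg [OF assms]]]])
qed

lemma mat_norm_imp_seminorm: "is_mat_norm N \<Longrightarrow> mat_seminorm N"
  unfolding is_mat_norm_def mat_seminorm_def by blast

lemma mat_norm_eq_0_iff: "is_mat_norm N \<Longrightarrow> N A = 0 \<longleftrightarrow> A = 0"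
  unfolding is_mat_norm_def by blast

lemma mat_norm_ge_norm:
  fixes N :: "'n::finite mat \<Rightarrow> real"
  assumes "is_mat_norm N"
  obtains m where "m > 0" and "\<And>A. m * norm A \<le> N A"
proof -
  have seminorm: "mat_seminorm N"
    using assms by (rule mat_norm_imp_seminorm)
  then have "continuous_on (sphere 0 1) N"
    by (rule mat_seminorm_continuous_on)
  then obtain A\<^sub>0 where A\<^sub>0: "A\<^sub>0 \<in> sphere (0::'n mat) 1"
    and min: "\<And>B. B \<in> sphere 0 1 \<Longrightarrow> N A\<^sub>0 \<le> N B"
    using continuous_attains_inf [of "sphere (0::'n mat) 1" N] by auto
  have "A\<^sub>0 \<noteq> 0"
    using A\<^sub>0 by auto
  have pos: "N A\<^sub>0 > 0"
    using mat_seminorm_nonneg [OF seminorm, of A\<^sub>0] mat_norm_eq_0_iff [OF assms, of A\<^sub>0] \<open>A\<^sub>0 \<noteq> 0\<close>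
    by linarith
  have bound: "N A\<^sub>0 * norm A \<le> N A" for A
  proof (cases "A = 0")
    case True
    then show ?thesis
      using mat_seminorm_nonneg [OF seminorm, of 0] by simp
  next
    case False
    let ?B = "(1 / norm A) *\<^sub>R A"
    have "N A = N (cscale (of_real (norm A)) ?B)"
      using False by (simp flip: scaleR_eq_cscale)
    also have "\<dots> = norm A * N ?B"
      by (simp add: mat_seminorm_cscale [OF seminorm])
    finally have "N A = norm A * N ?B" .
    moreover have "N A\<^sub>0 \<le> N ?B"
      using False by (intro min) simp
    ultimately show ?thesis
      by (metis mult.commute mult_right_mono norm_ge_zero)
  qed
  show ?thesis
    by (rule that [OF pos bound])
qed

lemma mat_norm_tendsto_zero_iff:
  assumes "is_mat_norm N"
  shows "((\<lambda>x. N (X x)) \<longlongrightarrow> 0) F \<longleftrightarrow> (X \<longlongrightarrow> 0) F"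
proof
  obtain m where m: "m > 0" "\<And>A. m * norm A \<le> N A"
    using mat_norm_ge_norm [OF assms] by blast
  assume "((\<lambda>x. N (X x)) \<longlongrightarrow> 0) F"
  then have lim: "((\<lambda>x. N (X x) / m) \<longlongrightarrow> 0) F"
    by (rule tendsto_divide_zero)
  have "\<forall>x. norm (X x) \<le> N (X x) / m"
    using m(2) by (simp add: pos_le_divide_eq [OF m(1)] mult.commute)
  then show "(X \<longlongrightarrow> 0) F"
    by (rule Lim_null_comparison [OF always_eventually lim])
next
  assume "(X \<longlongrightarrow> 0) F"
  then show "((\<lambda>x. N (X x)) \<longlongrightarrow> 0) F"
    by (rule mat_seminorm_tendsto_zero [OF mat_norm_imp_seminorm [OF assms]])
qed

lemma iterate_limit_pointE:
  assumes "is_mat_norm N" and "iterate_limit_point N f g"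
  obtains r where "strict_mono r" and "\<And>A. (\<lambda>j. (f ^^ r j) A) \<longlonglongrightarrow> g A"
proof -
  obtain r where "strict_mono r" and lim: "\<And>A. (\<lambda>j. N ((f ^^ r j) A - g A)) \<longlonglongrightarrow> 0"
    using assms(2) unfolding iterate_limit_point_def by blast
  moreover have "(\<lambda>j. (f ^^ r j) A) \<longlonglongrightarrow> g A" for A
    using lim [of A] by (simp add: mat_norm_tendsto_zero_iff [OF assms(1)] LIM_zero_iff)
  ultimately show ?thesis
    using that by blast
qed

lemma contractive_iterates_tendsto_zero:
  fixes f :: "'n::finite mat \<Rightarrow> 'n mat"
  assumes N: "is_mat_norm N" and "contractive N f" and r: "strict_mono r"
    and sub: "(\<lambda>j. (f ^^ r j) A) \<longlonglongrightarrow> 0"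
  shows "(\<lambda>k. (f ^^ k) A) \<longlonglongrightarrow> 0"
proof -
  define s where "s k = N ((f ^^ k) A)" for k
  have "decseq s"
    using assms(2) unfolding decseq_Suc_iff s_def contractive_def by simp
  moreover have "\<forall>k. 0 \<le> s k"
    unfolding s_def by (simp add: mat_seminorm_nonneg [OF mat_norm_imp_seminorm [OF N]])
  ultimately obtain L where L: "s \<longlonglongrightarrow> L"
    using decseq_convergent by blast
  moreover have "(s \<circ> r) \<longlonglongrightarrow> 0"
    using sub unfolding s_def comp_def by (simp add: mat_norm_tendsto_zero_iff [OF N])
  ultimately have "L = 0"
    using LIMSEQ_subseq_LIMSEQ [OF L r] LIMSEQ_unique by blast
  with L show ?thesis
    unfolding s_def by (simp add: mat_norm_tendsto_zero_iff [OF N])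
qed

lemma map_norm_nonneg: "is_map_norm M \<Longrightarrow> mat_linear T \<Longrightarrow> 0 \<le> M T"
  unfolding is_map_norm_def by blast

lemma map_norm_triangle:
  "is_map_norm M \<Longrightarrow> mat_linear S \<Longrightarrow> mat_linear T \<Longrightarrow> M (\<lambda>A. S A + T A) \<le> M S + M T"
  unfolding is_map_norm_def by blast

lemma map_norm_cscale:
  "is_map_norm M \<Longrightarrow> mat_linear T \<Longrightarrow> M (\<lambda>A. cscale c (T A)) = cmod c * M T"
  unfolding is_map_norm_def by blast

lemma map_norm_sum_le:
  assumes M: "is_map_norm M" and lin: "\<And>i. i \<in> S \<Longrightarrow> mat_linear (F i)"
  shows "M (\<lambda>A. \<Sum>i\<in>S. F i A) \<le> (\<Sum>i\<in>S. M (F i))"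
  using lin
proof (induction S rule: infinite_finite_induct)
  case (insert i S)
  have "M (\<lambda>A. \<Sum>j\<in>insert i S. F j A) = M (\<lambda>A. F i A + (\<Sum>j\<in>S. F j A))"
    using insert.hyps by simp
  also have "\<dots> \<le> M (F i) + M (\<lambda>A. \<Sum>j\<in>S. F j A)"
    using insert.prems by (intro map_norm_triangle [OF M] mat_linear_sum_fun) auto
  also have "\<dots> \<le> M (F i) + (\<Sum>j\<in>S. M (F j))"
    using insert.IH insert.prems by simp
  finally show ?case
    using insert.hyps by simp
qed (use map_norm_cscale [OF M, of "\<lambda>_. 0" 0] in \<open>simp_all add: mat_linear_def\<close>)

lemma mat_seminorm_map_norm_entry:
  assumes M: "is_map_norm M"
  shows "mat_seminorm (\<lambda>B. M (\<lambda>A. cscale (A $ a $ b) B))"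
  unfolding mat_seminorm_def
proof (intro conjI allI)
  fix B C c
  show "M (\<lambda>A. cscale (A $ a $ b) (B + C))
      \<le> M (\<lambda>A. cscale (A $ a $ b) B) + M (\<lambda>A. cscale (A $ a $ b) C)"
    using map_norm_triangle [OF M mat_linear_entry_cscale mat_linear_entry_cscale]
    by (simp add: cscale_add_right)
  show "M (\<lambda>A. cscale (A $ a $ b) (cscale c B)) = cmod c * M (\<lambda>A. cscale (A $ a $ b) B)"
    using map_norm_cscale [OF M mat_linear_entry_cscale]
    by (simp add: cscale_cscale mult.commute)
qed

text \<open>Expanding \<open>T\<close> in the matrix units bounds \<open>M T\<close> by a sum of seminorms of the
  matrices \<open>T (mat_unit a b)\<close>.\<close>

lemma map_norm_tendsto_zero:
  assumes M: "is_map_norm M" and lin: "\<And>k. mat_linear (T k)"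
    and lim: "\<And>A. (\<lambda>k. T k A) \<longlonglongrightarrow> 0"
  shows "(\<lambda>k. M (T k)) \<longlonglongrightarrow> 0"
proof (rule Lim_null_comparison)
  let ?P = "\<lambda>a b B. M (\<lambda>A. cscale (A $ a $ b) B)"
  have "M (T k) \<le> (\<Sum>a\<in>UNIV. \<Sum>b\<in>UNIV. ?P a b (T k (mat_unit a b)))" for k
  proof -
    have "M (T k) = M (\<lambda>A. \<Sum>a\<in>UNIV. \<Sum>b\<in>UNIV. cscale (A $ a $ b) (T k (mat_unit a b)))"
      by (rule arg_cong [OF mat_linear_unit_expansion [OF lin]])
    also have "\<dots> \<le> (\<Sum>a\<in>UNIV. M (\<lambda>A. \<Sum>b\<in>UNIV. cscale (A $ a $ b) (T k (mat_unit a b))))"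
      by (intro map_norm_sum_le [OF M] mat_linear_sum_fun mat_linear_entry_cscale)
    also have "\<dots> \<le> (\<Sum>a\<in>UNIV. \<Sum>b\<in>UNIV. ?P a b (T k (mat_unit a b)))"
      by (intro sum_mono map_norm_sum_le [OF M] mat_linear_entry_cscale)
    finally show ?thesis .
  qed
  then show "\<forall>\<^sub>F k in sequentially.
      norm (M (T k)) \<le> (\<Sum>a\<in>UNIV. \<Sum>b\<in>UNIV. ?P a b (T k (mat_unit a b)))"
    using map_norm_nonneg [OF M lin] by (intro always_eventually allI) simp
  show "(\<lambda>k. \<Sum>a\<in>UNIV. \<Sum>b\<in>UNIV. ?P a b (T k (mat_unit a b))) \<longlonglongrightarrow> 0"
    by (rule tendsto_null_sum, rule tendsto_null_sum,
        rule mat_seminorm_tendsto_zero [OF mat_seminorm_map_norm_entry [OF M] lim])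
qed

theorem mainTheorem7:
  fixes N :: "('n::finite) mat \<Rightarrow> real"
    and \<phi> \<psi> :: "('n::finite) mat \<Rightarrow> ('n::finite) mat"
    and M :: "(('n::finite) mat \<Rightarrow> ('n::finite) mat) \<Rightarrow> real"
  assumes "is_mat_norm N"
    and "mat_linear \<phi>"
    and "contractive N \<phi>"
    and "\<psi> \<circ> \<psi> = \<psi>"
    and "iterate_limit_point N \<phi> \<psi>"
    and "is_map_norm M"
  shows "(\<lambda>k. M (\<lambda>A. (\<phi> ^^ k) A - (\<phi> ^^ k) (\<psi> A))) \<longlonglongrightarrow> 0"
proof -
  obtain r where r: "strict_mono r" and lim: "\<And>A. (\<lambda>j. (\<phi> ^^ r j) A) \<longlonglongrightarrow> \<psi> A"
    using iterate_limit_pointE [OF assms(1,5)] by blast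
  have lin: "mat_linear (\<phi> ^^ k)" for k
    using assms(2) by (rule mat_linear_funpow)
  have "mat_linear \<psi>"
    using lin lim by (rule mat_linear_limit)
  have "\<psi> (\<psi> A) = \<psi> A" for A
    using fun_cong [OF assms(4), of A] by simp
  then have kernel: "\<psi> (A - \<psi> A) = 0" for A
    by (simp add: mat_linear_diff [OF \<open>mat_linear \<psi>\<close>])
  have "mat_linear (\<lambda>A. (\<phi> ^^ k) A - (\<phi> ^^ k) (\<psi> A))" for k
    by (rule mat_linear_diff_fun [OF lin mat_linear_comp [OF lin \<open>mat_linear \<psi>\<close>, unfolded comp_def]])
  moreover have "(\<lambda>k. (\<phi> ^^ k) A - (\<phi> ^^ k) (\<psi> A)) \<longlonglongrightarrow> 0" for A
  proof -
    have "(\<lambda>j. (\<phi> ^^ r j) (A - \<psi> A)) \<longlonglongrightarrow> 0"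
      using lim [of "A - \<psi> A"] by (simp add: kernel)
    then have "(\<lambda>k. (\<phi> ^^ k) (A - \<psi> A)) \<longlonglongrightarrow> 0"
      by (rule contractive_iterates_tendsto_zero [OF assms(1,3) r])
    then show ?thesis
      by (simp add: mat_linear_diff [OF lin])
  qed
  ultimately show ?thesis
    by (rule map_norm_tendsto_zero [OF assms(6)])
qed

end
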